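(* Identify the dual group of $\mathbb{T}^2$ with $\mathbb{Z}^2$ and let $K = \bigcup_{n=1}^\infty \{n\} \times \{-n,\dots,n\} \subset \mathbb{Z}^2$. Then $K$ is strictly positive definite, while the set $K_1 = \{\gamma \in \mathbb{Z} : \{\omega \in \mathbb{Z} : (\gamma,\omega) \in K\} \text{ is strictly positive definite in } \mathbb{Z}\}$ is empty.
   Context: $\mathbb{Z}^r$ is regarded as the dual group of $\mathbb{T}^r$ ($\mathbb{T}$ the complex numbers of modulus one) via $\gamma(z) = \prod_{k=1}^r z_k^{\gamma_k}$. A trigonometric polynomial on $\mathbb{Z}^r$ is a function of the form $\gamma \mapsto \sum_{i=1}^n c_i \gamma(x_i)$ with $x_i \in \mathbb{T}^r$, $c_i \in \mathbb{C}$. A subset $K \subset \mathbb{Z}^r$ is strictly positive definite if the only trigonometric polynomial vanishing at every point of $K$ is the identically zero function. *)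

theory Defs
  imports "HOL-Analysis.Analysis"
begin

text \<open>Z^r is represented as int^'r, T^r as complex^'r with all components of modulus one.
  The character gamma evaluated at z is the product of z_k powi gamma_k.\<close>

definition char_val :: "int^'r \<Rightarrow> complex^'r \<Rightarrow> complex" where
  "char_val \<gamma> z = (\<Prod>k\<in>UNIV. (z $ k) powi (\<gamma> $ k))"

definition torus :: "(complex^'r) set" where
  "torus = {z. \<forall>k. norm (z $ k) = 1}"

definition trig_poly :: "(int^'r \<Rightarrow> complex) \<Rightarrow> bool" where
  "trig_poly f \<longleftrightarrow> (\<exists>(n::nat) (c::nat \<Rightarrow> complex) (x::nat \<Rightarrow> complex^'r).
     (\<forall>i<n. x i \<in> torus) \<and> f = (\<lambda>\<gamma>. \<Sum>i<n. c i * char_val \<gamma> (x i)))"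

definition strictly_pd :: "(int^'r) set \<Rightarrow> bool" where
  "strictly_pd K \<longleftrightarrow>
     (\<forall>f. trig_poly f \<longrightarrow> (\<forall>\<gamma>\<in>K. f \<gamma> = 0) \<longrightarrow> f = (\<lambda>_. 0))"

definition K_ex :: "(int^2) set" where
  "K_ex = {\<gamma>. \<gamma> $ 1 \<ge> 1 \<and> \<bar>\<gamma> $ 2\<bar> \<le> \<gamma> $ 1}"

definition pair2 :: "int \<Rightarrow> int \<Rightarrow> int^2" where
  "pair2 g w = (\<chi> i. if i = 1 then g else w)"

end

theory Submission
  imports Defs "HOL-Library.Real_Mod"
begin

(* A trigonometric polynomial on Z^r is a finite combination of characters gamma |-> gamma(p)
   for distinct points p of the torus, so it vanishes identically iff all its coefficients do.
   The basic tool is a Vandermonde-type fact: if sum_p d_p e_p^m vanishes for card P consecutive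
   exponents m and the e_p are distinct and nonzero, then all d_p vanish.

   Part 1 (K is strictly positive definite): group the points p = (p1, p2) by their second
   coordinate.  For a large row index a, the row {a} x {-a..a} of K is long enough to apply the
   Vandermonde fact in the second coordinate, so every column sum sum_{p2 = beta} C_p p1^a vanishes.
   These vanish for all large a, hence again by Vandermonde (now in the first coordinate) all
   coefficients C_p are zero.

   Part 2 (K_1 is empty): every fibre of K is a bounded subset of Z, and no bounded subset of Z
   is strictly positive definite: a geometric sum over N-th roots of unity gives a nonzero
   trigonometric polynomial vanishing on a whole window of N - 1 consecutive integers. *)

text \<open>Power sums with distinct nonzero bases vanishing on card P consecutive exponents force all
  coefficients to vanish (invertibility of a Vandermonde matrix).\<close>
lemma power_sums_vanish_imp_zero:
  fixes e d :: "'a \<Rightarrow> 'b :: field"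
  assumes "finite P" "inj_on e P" "\<forall>p\<in>P. e p \<noteq> 0"
    and "\<forall>m. M \<le> m \<and> m < M + int (card P) \<longrightarrow> (\<Sum>p\<in>P. d p * e p powi m) = 0"
  shows "\<forall>p\<in>P. d p = 0"
  using assms
proof (induction P arbitrary: d M rule: finite_induct)
  case empty
  then show ?case by simp
next
  case (insert q P)
  text \<open>Multiplying by e p - e q eliminates q and shortens the window by one exponent.\<close>
  define d' where "d' p = d p * (e p - e q)" for p
  have card_insert: "card (insert q P) = card P + 1" using insert.hyps by simp
  have "\<forall>m. M \<le> m \<and> m < M + int (card P) \<longrightarrow> (\<Sum>p\<in>P. d' p * e p powi m) = 0"
  proof (intro allI impI)
    fix m assume m: "M \<le> m \<and> m < M + int (card P)"
    have "(\<Sum>p\<in>insert q P. d' p * e p powi m) =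
          (\<Sum>p\<in>insert q P. d p * e p powi (m+1)) - e q * (\<Sum>p\<in>insert q P. d p * e p powi m)"
      unfolding sum_distrib_left sum_subtractf[symmetric]
      using insert.prems(2) by (intro sum.cong) (auto simp: d'_def power_int_add algebra_simps)
    also have "\<dots> = 0" using insert.prems(3) m card_insert by simp
    finally show "(\<Sum>p\<in>P. d' p * e p powi m) = 0"
      using insert.hyps by (simp add: d'_def)
  qed
  then have "\<forall>p\<in>P. d' p = 0"
    using insert.IH insert.prems(1,2) by (auto simp: inj_on_def)
  moreover have "e p \<noteq> e q" if "p \<in> P" for p
    using insert.prems(1) insert.hyps(2) that unfolding inj_on_def by (metis insertCI)
  ultimately have rest: "\<forall>p\<in>P. d p = 0" by (auto simp: d'_def)
  have "(\<Sum>p\<in>insert q P. d p * e p powi M) = 0"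
    using insert.prems(3) card_insert by simp
  then have "d q * e q powi M = 0" using insert.hyps rest by simp
  then show ?case using insert.prems(2) rest by simp
qed

lemma trig_poly_normal_form:
  fixes f :: "int^'r \<Rightarrow> complex"
  assumes "trig_poly f"
  obtains X C where "finite X" "X \<subseteq> torus" "f = (\<lambda>\<gamma>. \<Sum>p\<in>X. C p * char_val \<gamma> p)"
proof -
  obtain n :: nat and c :: "nat \<Rightarrow> complex" and x :: "nat \<Rightarrow> complex^'r" where x_torus: "\<forall>i<n. x i \<in> torus"
    and f_eq: "f = (\<lambda>\<gamma>. \<Sum>i<n. c i * char_val \<gamma> (x i))"
    using assms unfolding trig_poly_def by blast
  define C where "C p = (\<Sum>i\<in>{i. i \<in> {..<n} \<and> x i = p}. c i)" for p
  have regroup: "(\<Sum>p\<in>x ` {..<n}. C p * char_val \<gamma> p) = (\<Sum>i<n. c i * char_val \<gamma> (x i))"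
    for \<gamma>
  proof -
    have "(\<Sum>p\<in>x ` {..<n}. C p * char_val \<gamma> p) =
      (\<Sum>p\<in>x ` {..<n}. \<Sum>i\<in>{i. i \<in> {..<n} \<and> x i = p}. c i * char_val \<gamma> (x i))"
      unfolding C_def sum_distrib_right by (rule sum.cong) auto
    also have "\<dots> = (\<Sum>i<n. c i * char_val \<gamma> (x i))"
      by (rule sum.group) auto
    finally show ?thesis .
  qed
  show ?thesis
  proof (rule that)
    show "finite (x ` {..<n})" by simp
    show "x ` {..<n} \<subseteq> torus" using x_torus by auto
    show "f = (\<lambda>\<gamma>. \<Sum>p\<in>x ` {..<n}. C p * char_val \<gamma> p)"
      by (simp only: f_eq regroup)
  qed
qed

lemma torus_component_nonzero:
  assumes "p \<in> torus"
  shows "p $ k \<noteq> 0"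
proof -
  have "norm (p $ k) = 1" using assms by (simp add: torus_def)
  then show ?thesis by auto
qed

lemma char_val_pair2: "char_val (pair2 a b) p = p$1 powi a * p$2 powi b"
  unfolding char_val_def pair2_def UNIV_2 by simp

text \<open>The row
  {a} x {-a..a} contains the window needed to apply the Vandermonde fact to the second coordinates.\<close>
lemma column_sums_vanish:
  fixes C :: "complex^2 \<Rightarrow> complex"
  assumes "finite X" "X \<subseteq> torus"
    and vanish: "\<forall>\<gamma>\<in>K_ex. (\<Sum>p\<in>X. C p * char_val \<gamma> p) = 0"
    and a: "a \<ge> int (card ((\<lambda>p. p$2) ` X)) + 1"
  shows "\<forall>\<beta>\<in>(\<lambda>p. p$2) ` X. (\<Sum>p\<in>{p\<in>X. p$2 = \<beta>}. C p * p$1 powi a) = 0"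
proof (rule power_sums_vanish_imp_zero[where e="\<lambda>\<beta>. \<beta>" and M="-a"])
  let ?B = "(\<lambda>p. p$2) ` X"
  show "finite ?B" "inj_on (\<lambda>\<beta>. \<beta>) ?B"
    using assms(1) by simp_all
  show "\<forall>\<beta>\<in>?B. \<beta> \<noteq> 0"
    using assms(2) by (auto intro!: torus_component_nonzero)
  show "\<forall>m. - a \<le> m \<and> m < - a + int (card ?B) \<longrightarrow>
          (\<Sum>\<beta>\<in>?B. (\<Sum>p\<in>{p\<in>X. p$2 = \<beta>}. C p * p$1 powi a) * \<beta> powi m) = 0"
  proof (intro allI impI)
    fix m assume m: "- a \<le> m \<and> m < - a + int (card ?B)"
    have "(\<Sum>\<beta>\<in>?B. (\<Sum>p\<in>{p\<in>X. p$2 = \<beta>}. C p * p$1 powi a) * \<beta> powi m) =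
          (\<Sum>\<beta>\<in>?B. \<Sum>p\<in>{p\<in>X. p$2 = \<beta>}. C p * (p$1 powi a * p$2 powi m))"
      unfolding sum_distrib_right by (rule sum.cong) (auto simp: mult.assoc)
    also have "\<dots> = (\<Sum>p\<in>X. C p * char_val (pair2 a m) p)"
      unfolding char_val_pair2 by (rule sum.group) (use assms(1) in auto)
    also have "\<dots> = 0"
    proof -
      have "pair2 a m \<in> K_ex" using m a unfolding K_ex_def pair2_def by auto
      then show ?thesis using vanish by blast
    qed
    finally show "(\<Sum>\<beta>\<in>?B. (\<Sum>p\<in>{p\<in>X. p$2 = \<beta>}. C p * p$1 powi a) * \<beta> powi m) = 0" .
  qed
qed

text \<open>Since the column sums vanish for all large exponents, the Vandermonde fact applied to the
  first coordinates within one column kills every coefficient.\<close>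
lemma coefficients_vanish_on_K:
  fixes C :: "complex^2 \<Rightarrow> complex"
  assumes X: "finite X" "X \<subseteq> torus"
    and vanish: "\<forall>\<gamma>\<in>K_ex. (\<Sum>p\<in>X. C p * char_val \<gamma> p) = 0"
    and p: "p \<in> X"
  shows "C p = 0"
proof -
  define M where "M = int (card ((\<lambda>p. p$2) ` X)) + 1"
  define column where "column = {q\<in>X. q$2 = p$2}"
  have "\<forall>q\<in>column. C q = 0"
  proof (rule power_sums_vanish_imp_zero[where e="\<lambda>q. q$1" and M=M])
    show "finite column" unfolding column_def using X by simp
    show "inj_on (\<lambda>q. q$1) column" unfolding column_def inj_on_def
      by (simp add: vec_eq_iff forall_2)
    show "\<forall>q\<in>column. q$1 \<noteq> 0"
      using X unfolding column_def by (auto intro!: torus_component_nonzero)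
    show "\<forall>m. M \<le> m \<and> m < M + int (card column) \<longrightarrow> (\<Sum>q\<in>column. C q * q$1 powi m) = 0"
    proof (intro allI impI)
      fix m assume "M \<le> m \<and> m < M + int (card column)"
      then have "\<forall>\<beta>\<in>(\<lambda>p. p$2) ` X. (\<Sum>q\<in>{q\<in>X. q$2 = \<beta>}. C q * q$1 powi m) = 0"
        using column_sums_vanish[OF X vanish] unfolding M_def by blast
      then show "(\<Sum>q\<in>column. C q * q$1 powi m) = 0"
        using p unfolding column_def by blast
    qed
  qed
  then show ?thesis using p unfolding column_def by auto
qed

theorem K_ex_strictly_pd: "strictly_pd K_ex"
  unfolding strictly_pd_def
proof (intro allI impI)
  fix f :: "int^2 \<Rightarrow> complex"
  assume "trig_poly f" and vanish: "\<forall>\<gamma>\<in>K_ex. f \<gamma> = 0"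
  from \<open>trig_poly f\<close> obtain X C where X: "finite X" "X \<subseteq> torus"
    and f_eq: "f = (\<lambda>\<gamma>. \<Sum>p\<in>X. C p * char_val \<gamma> p)"
    by (rule trig_poly_normal_form)
  have "\<forall>p\<in>X. C p = 0"
    using coefficients_vanish_on_K[OF X] vanish f_eq by auto
  then show "f = (\<lambda>_. 0)" unfolding f_eq by simp
qed

lemma cis_root_of_unity_eq_1_iff:
  assumes "N > 0"
  shows "cis (of_int j * (2*pi / real N)) = 1 \<longleftrightarrow> int N dvd j"
proof -
  have "of_int j * (2*pi / real N) = of_int n * (2*pi) \<longleftrightarrow> j = n * int N" for n :: int
  proof -
    have "of_int j * (2*pi / real N) = of_int n * (2*pi) \<longleftrightarrow> real_of_int j = of_int n * real N"
      using assms pi_gt_zero by (auto simp: field_simps)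
    also have "\<dots> \<longleftrightarrow> j = n * int N"
      by (metis of_int_eq_iff of_int_mult of_int_of_nat_eq)
    finally show ?thesis .
  qed
  then show ?thesis by (auto simp: cis_eq_1_iff dvd_def mult.commute)
qed

text \<open>The trigonometric polynomial w |-> sum_{k<N} omega^(k (w - s)) on Z equals N at w = s and
  vanishes at every w with N not dividing w - s, i.e. on s - N < w < s.  Hence a set of integers
  bounded in absolute value by G is annihilated by it for N = 2 |G| + 2, s = |G| + 1.\<close>
theorem bounded_not_strictly_pd:
  fixes S :: "(int^1) set"
  assumes bounded: "\<forall>w\<in>S. \<bar>w$1\<bar> \<le> G"
  shows "\<not> strictly_pd S"
proof -
  define s where "s = \<bar>G\<bar> + 1"
  define N where "N = nat (2 * s)"
  have N: "int N = 2 * s" "N > 0" unfolding N_def s_def by auto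
  define \<theta> where "\<theta> = 2*pi / real N"
  define x :: "nat \<Rightarrow> complex^1" where "x k = (\<chi> i. cis (real k * \<theta>))" for k
  define c where "c k = cis (- (real k * of_int s) * \<theta>)" for k
  define f where "f = (\<lambda>\<gamma>::int^1. \<Sum>k<N. c k * char_val \<gamma> (x k))"
  have "trig_poly f" unfolding trig_poly_def f_def
    by (intro exI[of _ N] exI[of _ c] exI[of _ x]) (auto simp: torus_def x_def)
  have f_geometric: "f w = (\<Sum>k<N. (cis (of_int (w$1 - s) * \<theta>)) ^ k)" for w
    unfolding f_def
  proof (rule sum.cong[OF refl])
    fix k
    have "c k * char_val w (x k) = cis (- (real k * of_int s) * \<theta>) * cis (of_int (w$1) * (real k * \<theta>))"
      unfolding c_def char_val_def x_def by (simp add: cis_power_int)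
    also have "\<dots> = cis (real k * (of_int (w$1 - s) * \<theta>))"
      by (simp add: cis_mult algebra_simps)
    also have "\<dots> = (cis (of_int (w$1 - s) * \<theta>)) ^ k"
      by (rule Complex.DeMoivre[symmetric])
    finally show "c k * char_val w (x k) = (cis (of_int (w$1 - s) * \<theta>)) ^ k" .
  qed
  have vanish: "f w = 0" if "w \<in> S" for w
  proof -
    define j where "j = w$1 - s"
    have "\<bar>w$1\<bar> \<le> G" using bounded that by blast
    then have "- int N < j" "j < 0" using N(1) unfolding j_def s_def by (simp_all add: abs_le_iff)
    then have "\<not> int N dvd j"
      using zdvd_imp_le[of "int N" "- j"] by auto
    then have "cis (of_int j * \<theta>) \<noteq> 1"
      using cis_root_of_unity_eq_1_iff[OF N(2)] unfolding \<theta>_def by blast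
    moreover have "(cis (of_int j * \<theta>)) ^ N = 1"
    proof -
      have "(cis (of_int j * \<theta>)) ^ N = cis (of_int j * (2 * pi))"
        using N(2) by (simp add: Complex.DeMoivre \<theta>_def)
      then show ?thesis by (auto simp: cis_eq_1_iff)
    qed
    ultimately show ?thesis unfolding f_geometric j_def[symmetric] sum_gp_strict by simp
  qed
  have "f (\<chi> i. s) \<noteq> 0"
    using N(2) unfolding f_geometric by simp
  then have "f \<noteq> (\<lambda>_. 0)" by metis
  then show ?thesis
    using \<open>trig_poly f\<close> vanish unfolding strictly_pd_def by blast
qed

text \<open>Each fibre of K over g is contained in {-|g|..|g|}.\<close>
lemma fibre_of_K_not_strictly_pd: "\<not> strictly_pd {w::int^1. pair2 g (w $ 1) \<in> K_ex}"
  by (rule bounded_not_strictly_pd[where G=g]) (auto simp: K_ex_def pair2_def)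

theorem mainTheorem13:
  shows "strictly_pd K_ex \<and>
         {g::int. strictly_pd {w::int^1. pair2 g (w $ 1) \<in> K_ex}} = {}"
  using K_ex_strictly_pd fibre_of_K_not_strictly_pd by blast

end
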